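(* If the semimetric space $(T,\rho_{2,T})$ is complete, then the semimetric space $(T\times[0,\infty),\rho_2)$ is complete.
   Context: $(U_1(t))_{t\in T}$ is a process with uniform $(0,1)$ margins such that the bivariate tail copulas $R_{s,t}(x,y)=\lim_{u\downarrow0}u^{-1}\mathbb{P}\{U_1(s)\le ux,U_1(t)\le uy\}$ exist for all $s,t\in T$, $x,y\ge0$. $\rho_{2,T}(s,t)=[2\{1-R_{s,t}(1,1)\}]^{1/2}$ on $T$ and $\rho_2((s,x),(t,y))=(x-2R_{s,t}(x,y)+y)^{1/2}$ on $T\times[0,\infty)$. *)

theory Defs
  imports "HOL-Probability.Probability"
begin

definition semimetric_complete :: "'a set \<Rightarrow> ('a \<Rightarrow> 'a \<Rightarrow> real) \<Rightarrow> bool" where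
  "semimetric_complete S d \<longleftrightarrow>
     (\<forall>\<sigma>. (\<forall>n. \<sigma> n \<in> S) \<and>
          (\<forall>e>0. \<exists>N. \<forall>m\<ge>N. \<forall>n\<ge>N. d (\<sigma> m) (\<sigma> n) < e)
       \<longrightarrow> (\<exists>z\<in>S. ((\<lambda>n. d (\<sigma> n) z) \<longlonglongrightarrow> 0)))"

definition rho2T :: "('t \<Rightarrow> 't \<Rightarrow> real \<Rightarrow> real \<Rightarrow> real) \<Rightarrow> 't \<Rightarrow> 't \<Rightarrow> real" where
  "rho2T R s t = sqrt (2 * (1 - R s t 1 1))"

definition rho2 :: "('t \<Rightarrow> 't \<Rightarrow> real \<Rightarrow> real \<Rightarrow> real) \<Rightarrow> 't \<times> real \<Rightarrow> 't \<times> real \<Rightarrow> real" where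
  "rho2 R p q = sqrt (snd p - 2 * R (fst p) (fst q) (snd p) (snd q) + snd q)"

end

theory Submission
  imports Defs
begin

text \<open>Let D = rho_2^2. From 0 \<le> R_{s,t}(x,y) \<le> min(x,y), R_{s,s}(x,y) = min(x,y), positive
  homogeneity of R_{s,t} and the tail limit of P(A \<inter> B) + P(B \<inter> C) \<le> P(B) + P(A \<inter> C), the function D
  satisfies the triangle inequality, |x - y| \<le> D((s,x),(t,y)), D((s,x),(s,y)) = |x - y|,
  D((s,x),(t,0)) = x and D((s,c),(t,c)) = c rho_{2,T}(s,t)^2.
  Hence the levels x_n of a rho_2-Cauchy sequence (t_n, x_n) converge to some c \<ge> 0. If c = 0, the
  sequence converges to (t, 0) for any t \<in> T. If c > 0, then
  c rho_{2,T}(t_m,t_n)^2 \<le> |x_m - c| + D((t_m,x_m),(t_n,x_n)) + |x_n - c|, so (t_n) is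
  rho_{2,T}-Cauchy, and its limit \<tau> gives the limit (\<tau>, c).\<close>

definition semimetric_Cauchy :: "('a \<Rightarrow> 'a \<Rightarrow> real) \<Rightarrow> (nat \<Rightarrow> 'a) \<Rightarrow> bool" where
  "semimetric_Cauchy d \<sigma> \<longleftrightarrow> (\<forall>e>0. \<exists>N. \<forall>m\<ge>N. \<forall>n\<ge>N. d (\<sigma> m) (\<sigma> n) < e)"

lemma semimetric_CauchyI:
  "(\<And>e. e > 0 \<Longrightarrow> \<exists>N. \<forall>m\<ge>N. \<forall>n\<ge>N. d (\<sigma> m) (\<sigma> n) < e) \<Longrightarrow> semimetric_Cauchy d \<sigma>"
  unfolding semimetric_Cauchy_def by blast

lemma semimetric_CauchyD:
  "semimetric_Cauchy d \<sigma> \<Longrightarrow> e > 0 \<Longrightarrow> \<exists>N. \<forall>m\<ge>N. \<forall>n\<ge>N. d (\<sigma> m) (\<sigma> n) < e"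
  unfolding semimetric_Cauchy_def by blast

lemma semimetric_completeI:
  assumes "\<And>\<sigma>. (\<And>n. \<sigma> n \<in> S) \<Longrightarrow> semimetric_Cauchy d \<sigma> \<Longrightarrow> \<exists>z\<in>S. (\<lambda>n. d (\<sigma> n) z) \<longlonglongrightarrow> 0"
  shows "semimetric_complete S d"
  using assms unfolding semimetric_complete_def semimetric_Cauchy_def by blast

lemma semimetric_completeD:
  assumes "semimetric_complete S d" "\<And>n. \<sigma> n \<in> S" "semimetric_Cauchy d \<sigma>"
  shows "\<exists>z\<in>S. (\<lambda>n. d (\<sigma> n) z) \<longlonglongrightarrow> 0"
  using assms unfolding semimetric_complete_def semimetric_Cauchy_def by blast

lemma semimetric_Cauchy_sqrt_iff:
  "semimetric_Cauchy (\<lambda>p q. sqrt (d p q)) \<sigma> \<longleftrightarrow> semimetric_Cauchy d \<sigma>"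
proof
  assume "semimetric_Cauchy (\<lambda>p q. sqrt (d p q)) \<sigma>"
  then show "semimetric_Cauchy d \<sigma>"
    unfolding semimetric_Cauchy_def by (metis real_sqrt_gt_zero real_sqrt_less_iff)
next
  assume Cauchy: "semimetric_Cauchy d \<sigma>"
  show "semimetric_Cauchy (\<lambda>p q. sqrt (d p q)) \<sigma>"
  proof (rule semimetric_CauchyI)
    fix e :: real assume "e > 0"
    then obtain N where "\<forall>m\<ge>N. \<forall>n\<ge>N. d (\<sigma> m) (\<sigma> n) < e\<^sup>2"
      using semimetric_CauchyD[OF Cauchy, of "e\<^sup>2"] by auto
    with \<open>e > 0\<close> show "\<exists>N. \<forall>m\<ge>N. \<forall>n\<ge>N. sqrt (d (\<sigma> m) (\<sigma> n)) < e"
      by (metis abs_of_pos real_sqrt_abs real_sqrt_less_iff)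
  qed
qed

lemma eventually_at_right_0_mult_le_1: "\<forall>\<^sub>F u in at_right 0. 0 < u \<and> u * c \<le> (1::real)"
proof -
  have "\<forall>\<^sub>F u in at_right 0. u \<in> {0<..<1 / (\<bar>c\<bar> + 1)}"
    by (rule eventually_at_right_real) simp
  then show ?thesis
  proof eventually_elim
    case (elim u)
    then have "u * (\<bar>c\<bar> + 1) < 1" by (simp add: field_simps)
    moreover have "u * c \<le> u * (\<bar>c\<bar> + 1)" using elim by (intro mult_left_mono) auto
    ultimately have "u * c \<le> 1" by linarith
    with elim show ?case by simp
  qed
qed

lemma tendsto_divide_at_right_0_le:
  fixes f :: "real \<Rightarrow> real"
  assumes "((\<lambda>u. f u / u) \<longlongrightarrow> L) (at_right 0)" "\<forall>\<^sub>F u in at_right 0. f u \<le> u * b"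
  shows "L \<le> b"
proof (rule tendsto_upperbound[OF assms(1) _ trivial_limit_at_right_real])
  show "\<forall>\<^sub>F u in at_right 0. f u / u \<le> b"
    using assms(2) eventually_at_right_0_mult_le_1[of 0]
    by eventually_elim (simp add: divide_le_eq mult.commute)
qed

lemma (in finite_measure) measure_Int_triangle:
  assumes "A \<in> sets M" "B \<in> sets M" "C \<in> sets M"
  shows "measure M (A \<inter> B) + measure M (B \<inter> C) \<le> measure M B + measure M (A \<inter> C)"
proof -
  have "measure M (A \<inter> B) + measure M (B \<inter> C)
      = measure M (A \<inter> B \<union> B \<inter> C) + measure M (A \<inter> B \<inter> (B \<inter> C))"
    using assms by (simp add: measure_Un3 fmeasurable_eq_sets)
  also have "\<dots> \<le> measure M B + measure M (A \<inter> C)"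
    using assms by (intro add_mono finite_measure_mono) auto
  finally show ?thesis .
qed

definition rho2_sq :: "('t \<Rightarrow> 't \<Rightarrow> real \<Rightarrow> real \<Rightarrow> real) \<Rightarrow> 't \<times> real \<Rightarrow> 't \<times> real \<Rightarrow> real" where
  "rho2_sq R p q = snd p - 2 * R (fst p) (fst q) (snd p) (snd q) + snd q"

lemma rho2_eq_sqrt_rho2_sq: "rho2 R = (\<lambda>p q. sqrt (rho2_sq R p q))"
  by (simp add: rho2_def rho2_sq_def fun_eq_iff)

locale tail_copula_family =
  fixes T :: "'t set" and R :: "'t \<Rightarrow> 't \<Rightarrow> real \<Rightarrow> real \<Rightarrow> real"
  assumes nonneg: "\<And>s t x y. s \<in> T \<Longrightarrow> t \<in> T \<Longrightarrow> 0 \<le> x \<Longrightarrow> 0 \<le> y \<Longrightarrow> 0 \<le> R s t x y"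
    and le_left: "\<And>s t x y. s \<in> T \<Longrightarrow> t \<in> T \<Longrightarrow> 0 \<le> x \<Longrightarrow> 0 \<le> y \<Longrightarrow> R s t x y \<le> x"
    and le_right: "\<And>s t x y. s \<in> T \<Longrightarrow> t \<in> T \<Longrightarrow> 0 \<le> x \<Longrightarrow> 0 \<le> y \<Longrightarrow> R s t x y \<le> y"
    and diagonal: "\<And>s x y. s \<in> T \<Longrightarrow> 0 \<le> x \<Longrightarrow> 0 \<le> y \<Longrightarrow> R s s x y = min x y"
    and homogeneous: "\<And>s t x y c. s \<in> T \<Longrightarrow> t \<in> T \<Longrightarrow> 0 \<le> x \<Longrightarrow> 0 \<le> y \<Longrightarrow> 0 < c \<Longrightarrow>
                        R s t (c * x) (c * y) = c * R s t x y"
    and triangle: "\<And>s t v x y z. s \<in> T \<Longrightarrow> t \<in> T \<Longrightarrow> v \<in> T \<Longrightarrow> 0 \<le> x \<Longrightarrow> 0 \<le> y \<Longrightarrow> 0 \<le> z \<Longrightarrow>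
                     R s t x y + R t v y z \<le> y + R s v x z"
begin

lemma abs_diff_le_rho2_sq:
  "p \<in> T \<times> {0..} \<Longrightarrow> q \<in> T \<times> {0..} \<Longrightarrow> \<bar>snd p - snd q\<bar> \<le> rho2_sq R p q"
  using le_left[of "fst p" "fst q" "snd p" "snd q"] le_right[of "fst p" "fst q" "snd p" "snd q"]
  by (auto simp: rho2_sq_def mem_Times_iff)

lemma rho2_sq_same_index: "s \<in> T \<Longrightarrow> 0 \<le> x \<Longrightarrow> 0 \<le> y \<Longrightarrow> rho2_sq R (s, x) (s, y) = \<bar>x - y\<bar>"
  by (simp add: rho2_sq_def diagonal min_def)

lemma rho2_sq_zero_level: "p \<in> T \<times> {0..} \<Longrightarrow> t \<in> T \<Longrightarrow> rho2_sq R p (t, 0) = snd p"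
  using nonneg[of "fst p" t "snd p" 0] le_right[of "fst p" t "snd p" 0]
  by (auto simp: rho2_sq_def mem_Times_iff)

lemma rho2_sq_same_level:
  assumes "s \<in> T" "t \<in> T" "0 < c"
  shows "rho2_sq R (s, c) (t, c) = c * (rho2T R s t)\<^sup>2"
proof -
  have "R s t 1 1 \<le> 1" using le_left[OF assms(1,2)] by simp
  moreover have "R s t c c = c * R s t 1 1" using homogeneous[OF assms(1,2), of 1 1 c] assms by simp
  ultimately show ?thesis by (simp add: rho2_sq_def rho2T_def algebra_simps)
qed

lemma rho2_sq_triangle:
  "p \<in> T \<times> {0..} \<Longrightarrow> q \<in> T \<times> {0..} \<Longrightarrow> r \<in> T \<times> {0..} \<Longrightarrow>
    rho2_sq R p r \<le> rho2_sq R p q + rho2_sq R q r"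
  using triangle[of "fst p" "fst q" "fst r" "snd p" "snd q" "snd r"]
  by (auto simp: rho2_sq_def mem_Times_iff)

lemma Cauchy_level:
  assumes mem: "\<And>n. \<sigma> n \<in> T \<times> {0..}" and Cauchy: "semimetric_Cauchy (rho2_sq R) \<sigma>"
  shows "Cauchy (\<lambda>n. snd (\<sigma> n))"
proof (rule CauchyI)
  fix e :: real assume "e > 0"
  then obtain N where N: "\<forall>m\<ge>N. \<forall>n\<ge>N. rho2_sq R (\<sigma> m) (\<sigma> n) < e"
    using semimetric_CauchyD[OF Cauchy] by blast
  have "\<bar>snd (\<sigma> m) - snd (\<sigma> n)\<bar> \<le> rho2_sq R (\<sigma> m) (\<sigma> n)" for m n
    using abs_diff_le_rho2_sq mem by blast
  with N show "\<exists>N. \<forall>m\<ge>N. \<forall>n\<ge>N. norm (snd (\<sigma> m) - snd (\<sigma> n)) < e"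
    by (metis order.strict_trans1 real_norm_def)
qed

lemma semimetric_Cauchy_index:
  assumes mem: "\<And>n. \<sigma> n \<in> T \<times> {0..}" and Cauchy: "semimetric_Cauchy (rho2_sq R) \<sigma>"
    and level: "(\<lambda>n. snd (\<sigma> n)) \<longlonglongrightarrow> c" and "0 < c"
  shows "semimetric_Cauchy (rho2T R) (\<lambda>n. fst (\<sigma> n))"
proof (rule semimetric_CauchyI)
  fix e :: real assume "e > 0"
  define d where "d = c * e\<^sup>2 / 3"
  have "d > 0" using \<open>e > 0\<close> \<open>0 < c\<close> by (simp add: d_def)
  then obtain N1 where N1: "\<forall>m\<ge>N1. \<forall>n\<ge>N1. rho2_sq R (\<sigma> m) (\<sigma> n) < d"
    using semimetric_CauchyD[OF Cauchy] by blast
  obtain N2 where N2: "\<forall>n\<ge>N2. \<bar>snd (\<sigma> n) - c\<bar> < d"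
    using level \<open>d > 0\<close> by (auto simp: LIMSEQ_iff)
  have "rho2T R (fst (\<sigma> m)) (fst (\<sigma> n)) < e" if "m \<ge> max N1 N2" "n \<ge> max N1 N2" for m n
  proof -
    obtain s x t y where m: "\<sigma> m = (s, x)" and n: "\<sigma> n = (t, y)" by fastforce
    have s: "s \<in> T" "0 \<le> x" and t: "t \<in> T" "0 \<le> y" using mem[of m] mem[of n] by (auto simp: m n)
    have "c * (rho2T R s t)\<^sup>2 = rho2_sq R (s, c) (t, c)"
      using rho2_sq_same_level[OF s(1) t(1) \<open>0 < c\<close>] by simp
    also have "\<dots> \<le> rho2_sq R (s, c) (s, x) + rho2_sq R (s, x) (t, c)"
      by (rule rho2_sq_triangle) (use s t \<open>0 < c\<close> in auto)
    also have "rho2_sq R (s, x) (t, c) \<le> rho2_sq R (s, x) (t, y) + rho2_sq R (t, y) (t, c)"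
      by (rule rho2_sq_triangle) (use s t \<open>0 < c\<close> in auto)
    also have "rho2_sq R (s, c) (s, x) + (rho2_sq R (s, x) (t, y) + rho2_sq R (t, y) (t, c))
        = \<bar>x - c\<bar> + rho2_sq R (\<sigma> m) (\<sigma> n) + \<bar>y - c\<bar>"
      using rho2_sq_same_index[of s c x] rho2_sq_same_index[of t y c] s t \<open>0 < c\<close>
      by (simp add: m n abs_minus_commute)
    also have "\<dots> < 3 * d"
    proof -
      have "rho2_sq R (\<sigma> m) (\<sigma> n) < d" "\<bar>snd (\<sigma> m) - c\<bar> < d" "\<bar>snd (\<sigma> n) - c\<bar> < d"
        using N1 N2 that by simp_all
      then show ?thesis by (simp add: m n)
    qed
    finally have "(rho2T R s t)\<^sup>2 < e\<^sup>2" using \<open>0 < c\<close> by (simp add: d_def)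
    then show ?thesis using \<open>e > 0\<close> m n by (simp add: power2_less_imp_less)
  qed
  then show "\<exists>N. \<forall>m\<ge>N. \<forall>n\<ge>N. rho2T R (fst (\<sigma> m)) (fst (\<sigma> n)) < e" by blast
qed

lemma rho2_sq_tendsto_0:
  assumes mem: "\<And>n. \<sigma> n \<in> T \<times> {0..}" and level: "(\<lambda>n. snd (\<sigma> n)) \<longlonglongrightarrow> c" and "0 < c"
    and "\<tau> \<in> T" and index: "(\<lambda>n. rho2T R (fst (\<sigma> n)) \<tau>) \<longlonglongrightarrow> 0"
  shows "(\<lambda>n. rho2_sq R (\<sigma> n) (\<tau>, c)) \<longlonglongrightarrow> 0"
proof -
  define bound where "bound n = \<bar>snd (\<sigma> n) - c\<bar> + c * (rho2T R (fst (\<sigma> n)) \<tau>)\<^sup>2" for n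
  have \<tau>c: "(\<tau>, c) \<in> T \<times> {0..}" using \<open>\<tau> \<in> T\<close> \<open>0 < c\<close> by simp
  have "bound \<longlonglongrightarrow> \<bar>c - c\<bar> + c * 0\<^sup>2"
    unfolding bound_def by (intro tendsto_intros level index)
  then have bound: "bound \<longlonglongrightarrow> 0" by simp
  have lower: "0 \<le> rho2_sq R (\<sigma> n) (\<tau>, c)" for n
    using abs_diff_le_rho2_sq[OF mem \<tau>c, of n] by linarith
  have upper: "rho2_sq R (\<sigma> n) (\<tau>, c) \<le> bound n" for n
  proof -
    obtain s x where n: "\<sigma> n = (s, x)" by fastforce
    have s: "s \<in> T" "0 \<le> x" using mem[of n] by (auto simp: n)
    have "rho2_sq R (s, x) (\<tau>, c) \<le> rho2_sq R (s, x) (s, c) + rho2_sq R (s, c) (\<tau>, c)"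
      by (rule rho2_sq_triangle) (use s \<tau>c in auto)
    then show ?thesis
      using rho2_sq_same_index[OF s, of c] rho2_sq_same_level[OF s(1) \<open>\<tau> \<in> T\<close> \<open>0 < c\<close>] \<open>0 < c\<close>
      by (simp add: n bound_def)
  qed
  show ?thesis
    by (rule real_tendsto_sandwich[where f="\<lambda>_. 0" and h=bound]) (simp_all add: lower upper bound)
qed

theorem semimetric_complete_rho2:
  assumes complete: "semimetric_complete T (rho2T R)"
  shows "semimetric_complete (T \<times> {0..}) (rho2 R)"
  unfolding rho2_eq_sqrt_rho2_sq
proof (rule semimetric_completeI)
  fix \<sigma> assume mem: "\<And>n. \<sigma> n \<in> T \<times> {0..}"
    and "semimetric_Cauchy (\<lambda>p q. sqrt (rho2_sq R p q)) \<sigma>"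
  then have Cauchy: "semimetric_Cauchy (rho2_sq R) \<sigma>" by (simp only: semimetric_Cauchy_sqrt_iff)
  then obtain c where level: "(\<lambda>n. snd (\<sigma> n)) \<longlonglongrightarrow> c"
    using Cauchy_level[OF mem Cauchy] by (auto simp: Cauchy_convergent_iff convergent_def)
  have "0 \<le> c" using mem by (intro LIMSEQ_le_const[OF level]) (auto simp: mem_Times_iff)
  obtain z where "z \<in> T \<times> {0..}" and z: "(\<lambda>n. rho2_sq R (\<sigma> n) z) \<longlonglongrightarrow> 0"
  proof (cases "c = 0")
    case True
    have "fst (\<sigma> 0) \<in> T" using mem[of 0] by (simp add: mem_Times_iff)
    then have "rho2_sq R (\<sigma> n) (fst (\<sigma> 0), 0) = snd (\<sigma> n)" for n
      using rho2_sq_zero_level[OF mem] by blast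
    then show thesis
      using that[of "(fst (\<sigma> 0), 0)"] level True \<open>fst (\<sigma> 0) \<in> T\<close> by simp
  next
    case False
    with \<open>0 \<le> c\<close> have "0 < c" by simp
    have "fst (\<sigma> n) \<in> T" for n using mem[of n] by (simp add: mem_Times_iff)
    then obtain \<tau> where "\<tau> \<in> T" "(\<lambda>n. rho2T R (fst (\<sigma> n)) \<tau>) \<longlonglongrightarrow> 0"
      using semimetric_completeD[OF complete _ semimetric_Cauchy_index[OF mem Cauchy level \<open>0 < c\<close>]]
      by blast
    then show thesis
      using that[of "(\<tau>, c)"] rho2_sq_tendsto_0[OF mem level \<open>0 < c\<close>] \<open>0 < c\<close> by simp
  qed
  moreover have "(\<lambda>n. sqrt (rho2_sq R (\<sigma> n) z)) \<longlonglongrightarrow> sqrt 0"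
    using z by (rule tendsto_real_sqrt)
  ultimately show "\<exists>z\<in>T \<times> {0..}. (\<lambda>n. sqrt (rho2_sq R (\<sigma> n) z)) \<longlonglongrightarrow> 0" by auto
qed

end

locale tail_copula_process = prob_space M for M :: "'w measure" +
  fixes U :: "'t \<Rightarrow> 'w \<Rightarrow> real" and T :: "'t set"
    and R :: "'t \<Rightarrow> 't \<Rightarrow> real \<Rightarrow> real \<Rightarrow> real"
  assumes measurable_U: "\<And>t. t \<in> T \<Longrightarrow> U t \<in> borel_measurable M"
    and uniform_margin: "\<And>t u. t \<in> T \<Longrightarrow> 0 \<le> u \<Longrightarrow> u \<le> 1 \<Longrightarrow>
                           measure M {\<omega> \<in> space M. U t \<omega> \<le> u} = u"
    and tail_limit: "\<And>s t x y. s \<in> T \<Longrightarrow> t \<in> T \<Longrightarrow> 0 \<le> x \<Longrightarrow> 0 \<le> y \<Longrightarrow>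
                       ((\<lambda>u. measure M {\<omega> \<in> space M. U s \<omega> \<le> u * x \<and> U t \<omega> \<le> u * y} / u)
                         \<longlongrightarrow> R s t x y) (at_right 0)"
begin

definition sublevel :: "'t \<Rightarrow> real \<Rightarrow> 'w set" where
  "sublevel t c = {\<omega> \<in> space M. U t \<omega> \<le> c}"

lemma sets_sublevel [measurable]: "t \<in> T \<Longrightarrow> sublevel t c \<in> sets M"
  unfolding sublevel_def using measurable_U[of t] by measurable

lemma measure_sublevel: "t \<in> T \<Longrightarrow> 0 \<le> c \<Longrightarrow> c \<le> 1 \<Longrightarrow> measure M (sublevel t c) = c"
  unfolding sublevel_def by (rule uniform_margin)

lemma tendsto_tail_copula:
  assumes "s \<in> T" "t \<in> T" "0 \<le> x" "0 \<le> y"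
  shows "((\<lambda>u. measure M (sublevel s (u * x) \<inter> sublevel t (u * y)) / u) \<longlongrightarrow> R s t x y) (at_right 0)"
proof -
  have "sublevel s (u * x) \<inter> sublevel t (u * y) = {\<omega> \<in> space M. U s \<omega> \<le> u * x \<and> U t \<omega> \<le> u * y}" for u
    by (auto simp: sublevel_def)
  then show ?thesis using tail_limit[OF assms] by simp
qed

lemma tail_copula_nonneg: "s \<in> T \<Longrightarrow> t \<in> T \<Longrightarrow> 0 \<le> x \<Longrightarrow> 0 \<le> y \<Longrightarrow> 0 \<le> R s t x y"
  by (rule tendsto_lowerbound[OF tendsto_tail_copula _ trivial_limit_at_right_real])
     (use eventually_at_right_0_mult_le_1[of 0] in \<open>auto elim: eventually_mono\<close>)

lemma tail_copula_le_left:
  assumes "s \<in> T" "t \<in> T" "0 \<le> x" "0 \<le> y"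
  shows "R s t x y \<le> x"
proof (rule tendsto_divide_at_right_0_le[OF tendsto_tail_copula[OF assms]])
  show "\<forall>\<^sub>F u in at_right 0. measure M (sublevel s (u * x) \<inter> sublevel t (u * y)) \<le> u * x"
    using eventually_at_right_0_mult_le_1[of x]
  proof eventually_elim
    case (elim u)
    have "measure M (sublevel s (u * x) \<inter> sublevel t (u * y)) \<le> measure M (sublevel s (u * x))"
      using assms by (intro finite_measure_mono) auto
    also have "\<dots> = u * x" using elim assms by (intro measure_sublevel) auto
    finally show ?case .
  qed
qed

lemma tail_copula_le_right:
  assumes "s \<in> T" "t \<in> T" "0 \<le> x" "0 \<le> y"
  shows "R s t x y \<le> y"
proof (rule tendsto_divide_at_right_0_le[OF tendsto_tail_copula[OF assms]])
  show "\<forall>\<^sub>F u in at_right 0. measure M (sublevel s (u * x) \<inter> sublevel t (u * y)) \<le> u * y"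
    using eventually_at_right_0_mult_le_1[of y]
  proof eventually_elim
    case (elim u)
    have "measure M (sublevel s (u * x) \<inter> sublevel t (u * y)) \<le> measure M (sublevel t (u * y))"
      using assms by (intro finite_measure_mono) auto
    also have "\<dots> = u * y" using elim assms by (intro measure_sublevel) auto
    finally show ?case .
  qed
qed

lemma tail_copula_diagonal:
  assumes "s \<in> T" "0 \<le> x" "0 \<le> y"
  shows "R s s x y = min x y"
proof (rule tendsto_unique[OF trivial_limit_at_right_real tendsto_tail_copula[OF assms(1,1,2,3)]])
  have "\<forall>\<^sub>F u in at_right 0. min x y = measure M (sublevel s (u * x) \<inter> sublevel s (u * y)) / u"
    using eventually_at_right_0_mult_le_1[of "min x y"]
  proof eventually_elim
    case (elim u)
    have "sublevel s (u * x) \<inter> sublevel s (u * y) = sublevel s (u * min x y)"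
      using elim by (auto simp: sublevel_def min_mult_distrib_left)
    moreover have "measure M (sublevel s (u * min x y)) = u * min x y"
      using elim assms by (intro measure_sublevel) auto
    ultimately show ?case using elim by simp
  qed
  then show "((\<lambda>u. measure M (sublevel s (u * x) \<inter> sublevel s (u * y)) / u) \<longlongrightarrow> min x y) (at_right 0)"
    by (rule Lim_transform_eventually[OF tendsto_const])
qed

lemma tail_copula_homogeneous:
  assumes "s \<in> T" "t \<in> T" "0 \<le> x" "0 \<le> y" "0 < c"
  shows "R s t (c * x) (c * y) = c * R s t x y"
proof (rule tendsto_unique[OF trivial_limit_at_right_real tendsto_tail_copula])
  have "filterlim (\<lambda>u. c * u) (at_right 0) (at_right 0)"
    using filtermap_times_pos_at_right[OF \<open>0 < c\<close>, of 0] by (simp add: filterlim_def)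
  then have "((\<lambda>u. c * (measure M (sublevel s ((c * u) * x) \<inter> sublevel t ((c * u) * y)) / (c * u)))
      \<longlongrightarrow> c * R s t x y) (at_right 0)"
    by (intro tendsto_mult_left filterlim_compose[OF tendsto_tail_copula[OF assms(1-4)]])
  then show "((\<lambda>u. measure M (sublevel s (u * (c * x)) \<inter> sublevel t (u * (c * y))) / u)
      \<longlongrightarrow> c * R s t x y) (at_right 0)"
    using \<open>0 < c\<close> by (simp add: ac_simps)
qed (use assms in auto)

lemma tail_copula_triangle:
  assumes "s \<in> T" "t \<in> T" "v \<in> T" "0 \<le> x" "0 \<le> y" "0 \<le> z"
  shows "R s t x y + R t v y z \<le> y + R s v x z"
proof -
  let ?A = "\<lambda>u. sublevel s (u * x)" and ?B = "\<lambda>u. sublevel t (u * y)" and ?C = "\<lambda>u. sublevel v (u * z)"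
  have "((\<lambda>u. (measure M (?A u \<inter> ?B u) + measure M (?B u \<inter> ?C u) - measure M (?A u \<inter> ?C u)) / u)
      \<longlongrightarrow> R s t x y + R t v y z - R s v x z) (at_right 0)"
    using tendsto_diff[OF tendsto_add[OF tendsto_tail_copula tendsto_tail_copula] tendsto_tail_copula] assms
    by (simp add: add_divide_distrib diff_divide_distrib)
  moreover have "\<forall>\<^sub>F u in at_right 0.
      measure M (?A u \<inter> ?B u) + measure M (?B u \<inter> ?C u) - measure M (?A u \<inter> ?C u) \<le> u * y"
    using eventually_at_right_0_mult_le_1[of y]
  proof eventually_elim
    case (elim u)
    have "measure M (?A u \<inter> ?B u) + measure M (?B u \<inter> ?C u) \<le> measure M (?B u) + measure M (?A u \<inter> ?C u)"
      using assms by (intro measure_Int_triangle) auto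
    moreover have "measure M (?B u) = u * y" using elim assms by (intro measure_sublevel) auto
    ultimately show ?case by simp
  qed
  ultimately have "R s t x y + R t v y z - R s v x z \<le> y"
    by (rule tendsto_divide_at_right_0_le)
  then show ?thesis by simp
qed

sublocale tail_copula_family T R
  by unfold_locales
    (fact tail_copula_nonneg tail_copula_le_left tail_copula_le_right tail_copula_diagonal
      tail_copula_homogeneous tail_copula_triangle)+

end

theorem lemmaA9:
  fixes M :: "'w measure" and U :: "'t \<Rightarrow> 'w \<Rightarrow> real" and T :: "'t set"
    and R :: "'t \<Rightarrow> 't \<Rightarrow> real \<Rightarrow> real \<Rightarrow> real"
  assumes "prob_space M"
    and meas: "\<And>t. t \<in> T \<Longrightarrow> U t \<in> borel_measurable M"
    and unif: "\<And>t u. t \<in> T \<Longrightarrow> 0 \<le> u \<Longrightarrow> u \<le> 1 \<Longrightarrow>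
                 measure M {\<omega> \<in> space M. U t \<omega> \<le> u} = u"
    and tail: "\<And>s t x y. s \<in> T \<Longrightarrow> t \<in> T \<Longrightarrow> 0 \<le> x \<Longrightarrow> 0 \<le> y \<Longrightarrow>
                 ((\<lambda>u. measure M {\<omega> \<in> space M. U s \<omega> \<le> u * x \<and> U t \<omega> \<le> u * y} / u)
                   \<longlongrightarrow> R s t x y) (at_right 0)"
    and complete: "semimetric_complete T (rho2T R)"
  shows "semimetric_complete (T \<times> {0..}) (rho2 R)"
proof -
  interpret tail_copula_process M U T R
    using assms by (simp add: tail_copula_process_def tail_copula_process_axioms_def)
  show ?thesis using complete by (rule semimetric_complete_rho2)
qed

end
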